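(* There exist $\mathfrak{c}\in(0,2)$ and a constant $C>0$ such that $$\int_{\mathbb{R}}\big||\phi_c(x)|^4-\phi_0(x)^4\big|\,|\mathfrak{z}(x)|^2\,dx\le C\,c^2\,\|\mathfrak{z}\|^2_{\mathcal{H}_{c^*}}$$ for all $c,c^*$ with $|c|,|c^*|<\mathfrak{c}$ and every $\mathfrak{z}\in\mathcal{H}_{c^*}$. Moreover, $\mathcal{H}_c=\mathcal{H}_0$ (as sets) for all $|c|<\mathfrak{c}$, and there exist constants $\sigma_1,\sigma_2>0$ such that $$\sigma_1\|\mathfrak{z}\|^2_{\mathcal{H}_0}\le\|\mathfrak{z}\|^2_{\mathcal{H}_c}\le\sigma_2\|\mathfrak{z}\|^2_{\mathcal{H}_0}$$ for all $|c|<\mathfrak{c}$ and all $\mathfrak{z}\in\mathcal{H}_0$.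
   Context: Black soliton: $\phi_0(x)=\sqrt{2}\,\tanh(x)/\sqrt{3-\tanh^2(x)}$, a stationary real solution of the quintic Gross–Pitaevskii equation $iu_t+u_{xx}=(|u|^4-1)u$. Dark soliton profiles: for $0<|c|<2$, set - $\kappa(c)=\sqrt{4-c^2}/2$; - $\mu_1(c)=\dfrac{3c^2-4+2\sqrt{3c^2+4}}{\sqrt{18c^2-8+(3c^2+4)^{3/2}}}$; - $\mu_2(c)=\dfrac{3c\sqrt{4-c^2}}{\sqrt{18c^2-8+(3c^2+4)^{3/2}}}$; - $\mu(c)$ defined by $\mu_1^2+\mu_2^2=2+2\mu$; - $\phi_c(x)=\dfrac{i\mu_1(c)+\mu_2(c)\tanh(\kappa(c)x)}{\sqrt{2}\sqrt{1+\mu(c)\tanh^2(\kappa(c)x)}}$. For $c=0$, $\phi_c$ means $\phi_0$. Weights: $\eta_c=1-|\phi_c|^4$ (so $\eta_0=1-\phi_0^4$). Spaces: for $|c|<2$, $\mathcal{H}_c$ is the space of continuous functions $f:\mathbb{R}\to\mathbb{C}$ with $f'\in L^2(\mathbb{R})$ and $\eta_c^{1/2}f\in L^2(\mathbb{R})$, with norm $$\|f\|_{\mathcal{H}_c}=\Big(\int_{\mathbb{R}}\big(|f'|^2+\eta_c|f|^2\big)\,dx\Big)^{1/2}.$$ *)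

theory Defs
  imports "HOL-Analysis.Analysis"
begin

definition phi0 :: "real \<Rightarrow> real" where
  "phi0 x = sqrt 2 * tanh x / sqrt (3 - (tanh x)^2)"

definition kappa :: "real \<Rightarrow> real" where
  "kappa c = sqrt (4 - c^2) / 2"

definition dnm :: "real \<Rightarrow> real" where
  "dnm c = sqrt (18 * c^2 - 8 + (3 * c^2 + 4) * sqrt (3 * c^2 + 4))"

definition mu1 :: "real \<Rightarrow> real" where
  "mu1 c = (3 * c^2 - 4 + 2 * sqrt (3 * c^2 + 4)) / dnm c"

definition mu2 :: "real \<Rightarrow> real" where
  "mu2 c = 3 * c * sqrt (4 - c^2) / dnm c"

definition mu :: "real \<Rightarrow> real" where
  "mu c = ((mu1 c)^2 + (mu2 c)^2 - 2) / 2"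

definition phi :: "real \<Rightarrow> real \<Rightarrow> complex" where
  "phi c x = (if c = 0 then complex_of_real (phi0 x)
     else (\<i> * complex_of_real (mu1 c) + complex_of_real (mu2 c * tanh (kappa c * x)))
          / complex_of_real (sqrt 2 * sqrt (1 + mu c * (tanh (kappa c * x))^2)))"

definition eta :: "real \<Rightarrow> real \<Rightarrow> real" where
  "eta c x = 1 - (cmod (phi c x))^4"

text \<open>g is a (weak) derivative of f: g is locally integrable and f is its primitive,
  i.e. f is locally absolutely continuous with a.e. derivative g.\<close>
definition weak_deriv :: "(real \<Rightarrow> complex) \<Rightarrow> (real \<Rightarrow> complex) \<Rightarrow> bool" where
  "weak_deriv f g \<longleftrightarrow>
     (\<forall>a b. a \<le> b \<longrightarrow> set_integrable lborel {a..b} g \<and>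
        f b - f a = (LINT t:{a..b}|lborel. g t))"

definition L2 :: "(real \<Rightarrow> complex) \<Rightarrow> bool" where
  "L2 g \<longleftrightarrow> g \<in> borel_measurable lborel \<and> integrable lborel (\<lambda>x. (cmod (g x))^2)"

definition Hspace :: "real \<Rightarrow> (real \<Rightarrow> complex) set" where
  "Hspace c = {f. continuous_on UNIV f \<and> (\<exists>g. weak_deriv f g \<and> L2 g) \<and>
                  f \<in> borel_measurable lborel \<and>
                  integrable lborel (\<lambda>x. eta c x * (cmod (f x))^2)}"

definition dH :: "(real \<Rightarrow> complex) \<Rightarrow> (real \<Rightarrow> complex)" where
  "dH f = (SOME g. weak_deriv f g \<and> L2 g)"

definition Hnorm :: "real \<Rightarrow> (real \<Rightarrow> complex) \<Rightarrow> real" where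
  "Hnorm c f = sqrt ((\<integral>x. (cmod (dH f x))^2 \<partial>lborel)
                    + (\<integral>x. eta c x * (cmod (f x))^2 \<partial>lborel))"

end

theory Submission
  imports Defs "HOL-Probability.Distributions"
begin

text \<open>Write \<open>s = sqrt (3 c\<^sup>2 + 4)\<close> and \<open>q = sech\<^sup>2 (kappa c x)\<close>. Then the dark soliton has
  the closed form \<open>|phi c x|\<^sup>2 = 1 - soliton_depth s q\<close>, and \<open>soliton_depth\<close> is Lipschitz in
  both arguments. Since \<open>s - 2\<close> and \<open>1 - kappa c\<close> are both \<open>O(c\<^sup>2)\<close>, this gives
  \<open>||phi c x|\<^sup>4 - phi0 x\<^sup>4| \<le> 21 c\<^sup>2 exp (-|x|)\<close>, while \<open>eta c\<close> is comparable to
  \<open>sech\<^sup>2\<close>: at most \<open>12 exp (-|x|)\<close> everywhere and at least \<open>1/25\<close> on \<open>[0,1]\<close>.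

  The lower bound on \<open>[0,1]\<close> controls \<open>z\<close> at its minimum point there; the fundamental theorem
  of calculus and Cauchy-Schwarz then give \<open>|z x|\<^sup>2 \<le> (52 + 2|x|) (Hnorm c z)\<^sup>2\<close>.
  Integrated against \<open>exp (-|x|)\<close>, this bounds the integral of \<open>|z|\<^sup>2\<close> against any
  exponentially decaying weight by \<open>(Hnorm c z)\<^sup>2\<close>, which yields both the main estimate and,
  applied to the weight \<open>eta c'\<close>, the equivalence of all the spaces \<open>Hspace c\<close> with
  \<open>|c| < 1/2\<close>.\<close>

section \<open>Hyperbolic functions\<close>

lemma tanh_sq_less_1: "(tanh (y::real))^2 < 1"
  using tanh_real_bounds[of y] by (simp add: abs_square_less_1 abs_less_iff)

lemma one_minus_tanh_sq_bounds: "0 < 1 - (tanh (y::real))^2" "1 - (tanh y)^2 \<le> 1"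
  using tanh_sq_less_1[of y] by auto

lemma one_minus_tanh_sq_eq: "1 - (tanh (y::real))^2 = 1 / (cosh y)^2"
proof -
  have "(cosh y)^2 \<noteq> 0" using cosh_real_pos[of y] by simp
  then show ?thesis
    using cosh_square_eq[of y] by (simp add: tanh_def field_simps)
qed

lemma cosh_abs_bounds: "exp \<bar>y\<bar> / 2 \<le> cosh (y::real)" "cosh y \<le> exp \<bar>y\<bar>"
proof -
  have c: "cosh y = (exp \<bar>y\<bar> + exp (-\<bar>y\<bar>)) / 2"
    by (metis cosh_field_def cosh_real_abs)
  show "exp \<bar>y\<bar> / 2 \<le> cosh y" unfolding c by simp
  show "cosh y \<le> exp \<bar>y\<bar>" unfolding c by simp
qed

lemma one_minus_tanh_sq_le_exp: "1 - (tanh (y::real))^2 \<le> 4 * exp (-(2 * \<bar>y\<bar>))"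
proof -
  have "(exp \<bar>y\<bar> / 2)^2 \<le> (cosh y)^2"
    using cosh_abs_bounds(1)[of y] by (intro power_mono) auto
  then have "1 / (cosh y)^2 \<le> 1 / (exp \<bar>y\<bar> / 2)^2"
    by (intro divide_left_mono) auto
  also have "\<dots> = 4 * exp (-(2 * \<bar>y\<bar>))"
    by (simp add: power2_eq_square exp_minus field_simps flip: exp_add)
  finally show ?thesis unfolding one_minus_tanh_sq_eq .
qed

lemma one_minus_tanh_sq_ge:
  assumes "\<bar>y\<bar> \<le> 1"
  shows "1/9 \<le> 1 - (tanh (y::real))^2"
proof -
  have "cosh y \<le> 3"
    using cosh_abs_bounds(2)[of y] assms exp_le by (smt (verit) exp_le_cancel_iff)
  then have "(cosh y)^2 \<le> 3^2"
    using cosh_real_pos[of y] by (intro power_mono) auto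
  then show ?thesis
    unfolding one_minus_tanh_sq_eq using cosh_real_pos[of y] by (simp add: divide_simps)
qed

lemma one_minus_tanh_sq_scaled_le:
  assumes "1/2 \<le> (k::real)"
  shows "1 - (tanh (k * x))^2 \<le> 4 * exp (-\<bar>x::real\<bar>)"
proof -
  have "\<bar>x\<bar> \<le> 2 * \<bar>k * x\<bar>"
    using assms mult_right_mono[of 1 "2 * k" "\<bar>x\<bar>"] by (simp add: abs_mult)
  then show ?thesis
    using one_minus_tanh_sq_le_exp[of "k * x"] by (smt (verit) exp_le_cancel_iff)
qed

lemma abs_mult_exp_le:
  assumes "3/4 \<le> k"
  shows "\<bar>x\<bar> * exp (-(2 * k * \<bar>x\<bar>)) \<le> 2 * exp (-\<bar>x::real\<bar>)"
proof -
  have "\<bar>x\<bar> \<le> 2 * exp (\<bar>x\<bar> / 2)"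
    using exp_ge_add_one_self[of "\<bar>x\<bar> / 2"] by linarith
  moreover have "exp (-(2 * k * \<bar>x\<bar>)) \<le> exp (-(\<bar>x\<bar> / 2)) * exp (-\<bar>x\<bar>)"
    using assms mult_right_mono[of "3/2" "2 * k" "\<bar>x\<bar>"] by (simp flip: exp_add)
  ultimately have "\<bar>x\<bar> * exp (-(2 * k * \<bar>x\<bar>)) \<le> 2 * exp (\<bar>x\<bar> / 2) * (exp (-(\<bar>x\<bar> / 2)) * exp (-\<bar>x\<bar>))"
    by (intro mult_mono) auto
  then show ?thesis by (simp add: exp_minus field_simps)
qed

lemma one_minus_tanh_sq_diff_le:
  assumes ab: "0 \<le> a" "a \<le> b"
  shows "\<bar>(1 - (tanh b)^2) - (1 - (tanh a)^2)\<bar> \<le> 8 * (b - a) * exp (-(2 * a :: real))"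
proof (cases "a = b")
  case False
  then have "a < b" using ab by simp
  define f where "f y = 1 - (tanh y)^2" for y :: real
  have "(f has_real_derivative -(2 * tanh y * (1 - (tanh y)^2))) (at y)" for y
    unfolding f_def by (auto intro!: derivative_eq_intros simp: power2_eq_square)
  with MVT2[OF \<open>a < b\<close>, of f "\<lambda>y. -(2 * tanh y * (1 - (tanh y)^2))"] obtain z where z: "a < z" "z < b"
    and mvt: "f b - f a = (b - a) * -(2 * tanh z * (1 - (tanh z)^2))"
    by blast
  have "exp (-(2 * \<bar>z\<bar>)) \<le> exp (-(2 * a))" using z ab by simp
  then have "1 - (tanh z)^2 \<le> 4 * exp (-(2 * a))"
    using one_minus_tanh_sq_le_exp[of z] by linarith
  moreover have "\<bar>tanh z\<bar> \<le> 1" using tanh_real_bounds[of z] by (simp add: abs_le_iff)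
  ultimately have "2 * \<bar>tanh z\<bar> * (1 - (tanh z)^2) \<le> 2 * 1 * (4 * exp (-(2 * a)))"
    using one_minus_tanh_sq_bounds[of z] by (intro mult_mono) auto
  have "\<bar>f b - f a\<bar> = (b - a) * (2 * \<bar>tanh z\<bar> * (1 - (tanh z)^2))"
    using \<open>a < b\<close> one_minus_tanh_sq_bounds[of z] by (simp add: mvt abs_mult)
  also have "\<dots> \<le> (b - a) * (2 * 1 * (4 * exp (-(2 * a))))"
    using \<open>a < b\<close> \<open>2 * \<bar>tanh z\<bar> * _ \<le> _\<close> by (intro mult_left_mono) auto
  finally show ?thesis by (simp add: f_def algebra_simps)
qed simp

lemma one_minus_tanh_sq_scaled_diff:
  assumes k: "3/4 \<le> k" "k \<le> 1"
  shows "\<bar>(1 - (tanh (k * x))^2) - (1 - (tanh x)^2)\<bar> \<le> 16 * (1 - k) * exp (-\<bar>x::real\<bar>)"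
proof -
  have "\<bar>k * x\<bar> = k * \<bar>x\<bar>" using k by (simp add: abs_mult)
  then have "(tanh (k * x))^2 = (tanh (k * \<bar>x\<bar>))^2" "(tanh x)^2 = (tanh \<bar>x\<bar>)^2"
    by (metis power2_abs tanh_real_abs)+
  then have "\<bar>(1 - (tanh (k * x))^2) - (1 - (tanh x)^2)\<bar>
      = \<bar>(1 - (tanh \<bar>x\<bar>)^2) - (1 - (tanh (k * \<bar>x\<bar>))^2)\<bar>"
    by (simp add: abs_minus_commute)
  also have "\<dots> \<le> 8 * (\<bar>x\<bar> - k * \<bar>x\<bar>) * exp (-(2 * (k * \<bar>x\<bar>)))"
    using k mult_right_mono[of k 1 "\<bar>x\<bar>"] by (intro one_minus_tanh_sq_diff_le) auto
  also have "\<dots> = 8 * (1 - k) * (\<bar>x\<bar> * exp (-(2 * k * \<bar>x\<bar>)))"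
    by (simp add: algebra_simps)
  also have "\<dots> \<le> 8 * (1 - k) * (2 * exp (-\<bar>x\<bar>))"
    using k abs_mult_exp_le[OF k(1)] by (intro mult_left_mono) auto
  also have "\<dots> = 16 * (1 - k) * exp (-\<bar>x\<bar>)" by simp
  finally show ?thesis .
qed

lemma borel_measurable_tanh [measurable]: "(tanh :: real \<Rightarrow> real) \<in> borel_measurable borel"
  by (intro borel_measurable_continuous_onI continuous_intros) simp

section \<open>The modulus of the dark soliton\<close>

definition rho :: "real \<Rightarrow> real" where
  "rho c = sqrt (3 * c^2 + 4)"

lemma rho_sq: "(rho c)^2 = 3 * c^2 + 4"
  by (simp add: rho_def)

lemma rho_ge_2: "2 \<le> rho c"
  unfolding rho_def by (rule real_le_rsqrt) simp

lemma rho_gt_2: "c \<noteq> 0 \<Longrightarrow> 2 < rho c"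
  unfolding rho_def by (rule real_less_rsqrt) simp

lemma rho_less_4: "c^2 < 4 \<Longrightarrow> rho c < 4"
  unfolding rho_def by (rule real_sqrt_less_iff[THEN iffD2, of _ "4^2", simplified]) simp

lemma rho_minus_2_le: "rho c - 2 \<le> 3/4 * c^2"
proof -
  have "(rho c - 2) * (rho c + 2) = 3 * c^2"
    using rho_sq[of c] by (simp add: algebra_simps power2_eq_square)
  then have "rho c - 2 = 3 * c^2 / (rho c + 2)"
    using rho_ge_2[of c] by (simp add: eq_divide_eq)
  also have "\<dots> \<le> 3 * c^2 / 4"
    using rho_ge_2[of c] by (intro divide_left_mono) auto
  finally show ?thesis by simp
qed

lemma rho_le_3: "c^2 < 1/4 \<Longrightarrow> rho c \<le> 3"
  using rho_minus_2_le[of c] by linarith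

lemma kappa_bounds:
  assumes "c^2 < 1/4"
  shows "3/4 \<le> kappa c" "kappa c \<le> 1" "1 - kappa c \<le> c^2/4"
proof -
  define r where "r = sqrt (4 - c^2)"
  have r: "r^2 = 4 - c^2" "0 \<le> r" using assms by (simp_all add: r_def)
  have "r \<le> 2" by (rule power2_le_imp_le) (use r in simp_all)
  have "3/2 \<le> r" by (rule power2_le_imp_le) (use r assms in \<open>simp_all add: power2_eq_square\<close>)
  then show "3/4 \<le> kappa c" "kappa c \<le> 1" using \<open>r \<le> 2\<close> by (simp_all add: kappa_def r_def[symmetric])
  have "(2 - r) * (2 + r) = c^2" using r by (simp add: algebra_simps power2_eq_square)
  then have "2 - r = c^2 / (2 + r)" using r by (simp add: eq_divide_eq)
  also have "\<dots> \<le> c^2 / 2" using r by (intro divide_left_mono) auto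
  finally show "1 - kappa c \<le> c^2/4" by (simp add: kappa_def r_def[symmetric])
qed

definition soliton_depth :: "real \<Rightarrow> real \<Rightarrow> real" where
  "soliton_depth s q = (16 - s^2) * q / (4 * s + 2 * (4 - s) * q)"

lemma one_minus_soliton_depth_eq:
  assumes "-4 < s" "(s + 4) + (s - 4) * q \<noteq> 0"
  shows "1 - soliton_depth s (1 - q) = (s - 2 + (s + 2) * (4 - s) / (s + 4) * q) / (2 * (1 + (s - 4) / (s + 4) * q))"
proof -
  have "4 * s + 2 * (4 - s) * (1 - q) = 2 * ((s + 4) + (s - 4) * q)"
    by (simp add: algebra_simps)
  with assms show ?thesis
    by (simp add: soliton_depth_def divide_simps) (simp add: algebra_simps power2_eq_square)
qed

lemma soliton_depth_bounds:
  assumes s: "2 \<le> s" "s \<le> 3" and q: "0 \<le> q" "q \<le> 1"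
  shows "0 \<le> soliton_depth s q" "soliton_depth s q \<le> 1" "soliton_depth s q \<le> 3/2 * q" "7/16 * q \<le> soliton_depth s q"
proof -
  define D where "D = 4 * s + 2 * (4 - s) * q"
  have D: "8 \<le> D" "D \<le> 16"
    using s q mult_nonneg_nonneg[of "4 - s" q] mult_mono[of "4 - s" 2 q 1]
    unfolding D_def by (simp_all add: algebra_simps)
  have "s^2 \<le> 3^2" "2^2 \<le> s^2" using s by (intro power_mono; simp)+
  then have n: "7 \<le> 16 - s^2" "16 - s^2 \<le> 12" by simp_all
  have U: "soliton_depth s q = (16 - s^2) * q / D" unfolding soliton_depth_def D_def ..
  show "0 \<le> soliton_depth s q" unfolding U using n D q by simp
  have "(16 - s^2) * q \<le> D"
  proof -
    have "(8 + 2 * s - s^2) * q \<le> (8 + 2 * s - s^2) * 1"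
      using q s n by (intro mult_left_mono) auto
    moreover have "0 \<le> (s + 4) * (s - 2)" using s by simp
    ultimately show ?thesis unfolding D_def by (simp add: algebra_simps power2_eq_square)
  qed
  then show "soliton_depth s q \<le> 1" unfolding U using D by simp
  have "(16 - s^2) * q \<le> 12 * q" using n q by (intro mult_right_mono) auto
  also have "\<dots> \<le> 3/2 * q * D" using mult_left_mono[OF D(1) q(1)] by (simp add: mult.commute)
  finally have "(16 - s^2) * q \<le> 3/2 * q * D" .
  then show "soliton_depth s q \<le> 3/2 * q" unfolding U using D by (simp add: pos_divide_le_eq)
  have "7/16 * q * D \<le> 7 * q" using mult_left_mono[OF D(2) q(1)] by (simp add: mult.commute)
  also have "\<dots> \<le> (16 - s^2) * q" using n q by (intro mult_right_mono) auto
  finally have "7/16 * q * D \<le> (16 - s^2) * q" .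
  then show "7/16 * q \<le> soliton_depth s q" unfolding U using D by (simp add: pos_le_divide_eq)
qed

lemma soliton_depth_diff_le:
  assumes s: "2 \<le> s" "s \<le> 3" and q: "0 \<le> q" "q \<le> 1"
  shows "\<bar>soliton_depth s q - soliton_depth 2 q\<bar> \<le> 3/2 * (s - 2) * q"
proof -
  define D E P where "D = 4 * s + 2 * (4 - s) * q" and "E = 8 + 4 * q"
    and "P = 8 * (s + 8) + 4 * q * (s - 4)"
  have D: "8 \<le> D" and E: "8 \<le> E"
    using s q mult_nonneg_nonneg[of "4 - s" q] unfolding D_def E_def by (simp_all add: algebra_simps)
  have P: "0 \<le> P" "P \<le> 96"
    using s q mult_mono[of q 1 "4 - s" 2] mult_nonneg_nonneg[of q "4 - s"]
    unfolding P_def by (simp_all add: algebra_simps)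
  have "soliton_depth s q - soliton_depth 2 q = ((16 - s^2) * q * E - 12 * q * D) / (D * E)"
    using D E by (simp add: soliton_depth_def D_def E_def diff_frac_eq)
  also have "(16 - s^2) * q * E - 12 * q * D = - ((s - 2) * q * P)"
    unfolding D_def E_def P_def by (simp add: algebra_simps power2_eq_square)
  finally have "\<bar>soliton_depth s q - soliton_depth 2 q\<bar> = (s - 2) * q * P / (D * E)"
    using s q P D E by simp
  also have "\<dots> \<le> (s - 2) * q * 96 / (8 * 8)"
    using s q P D E by (intro frac_le mult_left_mono mult_mono) auto
  also have "\<dots> = 3/2 * (s - 2) * q" by simp
  finally show ?thesis .
qed

lemma soliton_depth_2_lipschitz:
  assumes "0 \<le> q" "0 \<le> p"
  shows "\<bar>soliton_depth 2 q - soliton_depth 2 p\<bar> \<le> 3/2 * \<bar>q - p\<bar>"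
proof -
  have soliton_depth_2: "soliton_depth 2 r = 3 * r / (2 + r)" if "0 \<le> r" for r
    using that by (simp add: soliton_depth_def field_simps)
  have "soliton_depth 2 q - soliton_depth 2 p = 6 * (q - p) / ((2 + q) * (2 + p))"
    unfolding soliton_depth_2[OF assms(1)] soliton_depth_2[OF assms(2)]
    using assms by (simp add: field_simps)
  then have "\<bar>soliton_depth 2 q - soliton_depth 2 p\<bar> = 6 * \<bar>q - p\<bar> / ((2 + q) * (2 + p))"
    using assms by (simp only: abs_divide abs_mult)
  also have "\<dots> \<le> 6 * \<bar>q - p\<bar> / (2 * 2)"
    using assms by (intro divide_left_mono mult_mono) auto
  finally show ?thesis by simp
qed

lemma dnm_eq: "dnm c = (rho c + 4) * sqrt (rho c - 2)"
proof -
  have "18 * c^2 - 8 + (3 * c^2 + 4) * sqrt (3 * c^2 + 4) = (rho c - 2) * (rho c + 4)^2"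
    using rho_sq[of c] unfolding rho_def[symmetric]
    by (simp add: power2_eq_square algebra_simps)
  then show ?thesis
    using rho_ge_2[of c] by (simp add: dnm_def real_sqrt_mult)
qed

lemma mu1_eq: "mu1 c = sqrt (rho c - 2)"
proof -
  have "3 * c^2 - 4 + 2 * sqrt (3 * c^2 + 4) = (rho c - 2) * (rho c + 4)"
    using rho_sq[of c] unfolding rho_def[symmetric] by (simp add: algebra_simps power2_eq_square)
  then have "mu1 c = (rho c - 2) / sqrt (rho c - 2)"
    using rho_ge_2[of c] by (simp add: mu1_def dnm_eq)
  then show ?thesis
    using rho_ge_2[of c] by (simp add: real_div_sqrt)
qed

lemma mu2_sq:
  assumes "c \<noteq> 0" "c^2 \<le> 4"
  shows "(mu2 c)^2 = (rho c + 2) * (4 - rho c) / (rho c + 4)"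
proof -
  define s where "s = rho c"
  have s2: "2 < s" using rho_gt_2[OF assms(1)] by (simp add: s_def)
  have "(s - 2) * (s + 2) * (4 - s) * (4 + s) = (s^2 - 4) * (16 - s^2)"
    by (simp add: algebra_simps power2_eq_square)
  then have "9 * c^2 * (4 - c^2) = (s - 2) * (s + 2) * (4 - s) * (4 + s)"
    by (simp only: s_def rho_sq) (simp add: algebra_simps power2_eq_square)
  then have "(mu2 c)^2 = (s - 2) * (s + 2) * (4 - s) * (4 + s) / ((s + 4)^2 * (s - 2))"
    using assms s2 by (simp add: mu2_def dnm_eq s_def power_mult_distrib power_divide)
  also have "\<dots> = (s + 2) * (4 - s) / (s + 4)"
    using s2 by (simp add: divide_simps) (simp add: algebra_simps power2_eq_square)
  finally show ?thesis unfolding s_def .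
qed

lemma mu_eq:
  assumes "c \<noteq> 0" "c^2 \<le> 4"
  shows "mu c = (rho c - 4) / (rho c + 4)"
  using rho_gt_2[OF assms(1)] rho_ge_2[of c]
  by (simp add: mu_def mu1_eq mu2_sq[OF assms] field_simps)

lemma phi0_sq: "(phi0 x)^2 = 1 - soliton_depth 2 (1 - (tanh x)^2)"
proof -
  have "3 - (tanh x)^2 > 0" using tanh_sq_less_1[of x] by simp
  then show ?thesis
    by (simp add: phi0_def soliton_depth_def divide_simps)
qed

lemma cmod_phi_sq:
  assumes "c^2 < 4"
  shows "(cmod (phi c x))^2 = 1 - soliton_depth (rho c) (1 - (tanh (kappa c * x))^2)"
proof (cases "c = 0")
  case True
  then show ?thesis by (simp add: phi_def kappa_def rho_def phi0_sq)
next
  case False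
  define s T where "s = rho c" and "T = tanh (kappa c * x)"
  have s: "2 < s" "s < 4" using rho_gt_2[OF False] rho_less_4[OF assms] by (simp_all add: s_def)
  have T: "T^2 < 1" unfolding T_def by (rule tanh_sq_less_1)
  have "(s - 4) / (s + 4) * 1 \<le> (s - 4) / (s + 4) * T^2"
    using s T by (intro mult_left_mono_neg) (auto simp: divide_nonpos_pos)
  moreover have "-1 < (s - 4) / (s + 4)" using s by (simp add: field_simps)
  ultimately have pos: "0 < 1 + mu c * T^2"
    using mu_eq[OF False] assms unfolding s_def by simp
  have "(s + 4) + (s - 4) * T^2 = (s + 4) * (1 + (s - 4) / (s + 4) * T^2)"
    using s by (simp add: field_simps)
  then have nz: "(s + 4) + (s - 4) * T^2 \<noteq> 0"
    using pos s mu_eq[OF False] assms unfolding s_def by auto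
  have "phi c x = (\<i> * mu1 c + mu2 c * T) / (sqrt 2 * sqrt (1 + mu c * T^2))"
    using False by (simp add: phi_def T_def)
  then have "(cmod (phi c x))^2 = ((mu1 c)^2 + (mu2 c)^2 * T^2) / (2 * (1 + mu c * T^2))"
    using pos by (simp add: cmod_power2 power_divide power_mult_distrib add_divide_distrib)
  also have "\<dots> = 1 - soliton_depth s (1 - T^2)"
    using s nz assms False
    by (simp add: one_minus_soliton_depth_eq mu1_eq mu2_sq mu_eq s_def)
  finally show ?thesis unfolding s_def T_def .
qed

lemma borel_measurable_phi [measurable]: "phi c \<in> borel_measurable borel"
  unfolding phi_def phi0_def by measurable

lemma borel_measurable_eta [measurable]: "eta c \<in> borel_measurable borel"
  unfolding eta_def by measurable

lemma eta_eq_soliton_depth: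
  fixes c x :: real
  assumes "c^2 < 4"
  defines "U \<equiv> soliton_depth (rho c) (1 - (tanh (kappa c * x))^2)"
  shows "eta c x = U * (2 - U)"
proof -
  have "(cmod (phi c x))^4 = ((cmod (phi c x))^2)^2" by simp
  then show ?thesis
    unfolding eta_def cmod_phi_sq[OF assms(1)] U_def by (simp add: algebra_simps power2_eq_square)
qed

lemma eta_bounds:
  assumes c: "c^2 < 1/4"
  shows "0 \<le> eta c x" "eta c x \<le> 12 * exp (-\<bar>x\<bar>)" "x \<in> {0..1} \<Longrightarrow> 1/25 \<le> eta c x"
proof -
  define S where "S = 1 - (tanh (kappa c * x))^2"
  define U where "U = soliton_depth (rho c) S"
  have S: "0 \<le> S" "S \<le> 1" using one_minus_tanh_sq_bounds[of "kappa c * x"] by (auto simp: S_def)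
  have U: "0 \<le> U" "U \<le> 1" "U \<le> 3/2 * S" "7/16 * S \<le> U"
    unfolding U_def using soliton_depth_bounds[OF rho_ge_2 rho_le_3[OF c] S] by blast+
  have eta: "eta c x = U * (2 - U)"
    unfolding U_def S_def using c by (intro eta_eq_soliton_depth) simp
  show "0 \<le> eta c x" unfolding eta using U by simp
  have "U * (2 - U) = 2 * U - U^2" by (simp add: algebra_simps power2_eq_square)
  then have "eta c x \<le> 2 * U" unfolding eta by simp
  also have "\<dots> \<le> 3 * S" using U by simp
  also have "S \<le> 4 * exp (-\<bar>x\<bar>)"
    unfolding S_def using kappa_bounds(1)[OF c] by (intro one_minus_tanh_sq_scaled_le) simp
  finally show "eta c x \<le> 12 * exp (-\<bar>x\<bar>)" by simp
  assume "x \<in> {0..1}"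
  then have "\<bar>kappa c * x\<bar> \<le> 1"
    using kappa_bounds[OF c] by (simp add: abs_mult mult_le_one)
  then have "1/9 \<le> S" unfolding S_def by (rule one_minus_tanh_sq_ge)
  moreover have "U * 1 \<le> U * (2 - U)" using U by (intro mult_left_mono) auto
  ultimately show "1/25 \<le> eta c x" unfolding eta using U by linarith
qed

lemma soliton_depth_perturbation_le:
  assumes c: "c^2 < 1/4"
  shows "\<bar>soliton_depth (rho c) (1 - (tanh (kappa c * x))^2) - soliton_depth 2 (1 - (tanh x)^2)\<bar>
    \<le> 21/2 * c^2 * exp (-\<bar>x\<bar>)"
proof -
  define E where "E = exp (-\<bar>x\<bar>)"
  define S1 S0 where "S1 = 1 - (tanh (kappa c * x))^2" and "S0 = 1 - (tanh x)^2"
  have S1: "0 \<le> S1" "S1 \<le> 1" and S0: "0 \<le> S0"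
    using one_minus_tanh_sq_bounds[of "kappa c * x"] one_minus_tanh_sq_bounds[of x]
    by (auto simp: S1_def S0_def)
  have s: "2 \<le> rho c" "rho c \<le> 3" "rho c - 2 \<le> 3/4 * c^2"
    using rho_ge_2 rho_le_3[OF c] rho_minus_2_le by auto
  have "\<bar>soliton_depth (rho c) S1 - soliton_depth 2 S1\<bar> \<le> 9/2 * c^2 * E"
  proof -
    have "S1 \<le> 4 * E"
      unfolding S1_def E_def using kappa_bounds(1)[OF c] by (intro one_minus_tanh_sq_scaled_le) simp
    then have "3/2 * (rho c - 2) * S1 \<le> 3/2 * (3/4 * c^2) * (4 * E)"
      using s S1 by (intro mult_mono mult_left_mono) auto
    also have "\<dots> = 9/2 * c^2 * E" by simp
    finally show ?thesis using soliton_depth_diff_le[OF s(1,2) S1] by linarith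
  qed
  moreover have "\<bar>soliton_depth 2 S1 - soliton_depth 2 S0\<bar> \<le> 6 * c^2 * E"
  proof -
    have "\<bar>S1 - S0\<bar> \<le> 16 * (1 - kappa c) * E"
      unfolding S1_def S0_def E_def using kappa_bounds[OF c] by (intro one_minus_tanh_sq_scaled_diff) auto
    also have "\<dots> \<le> 16 * (c^2/4) * E"
      unfolding E_def using kappa_bounds(3)[OF c] by (intro mult_right_mono) auto
    finally have "3/2 * \<bar>S1 - S0\<bar> \<le> 6 * c^2 * E" by (simp add: mult_ac)
    then show ?thesis using soliton_depth_2_lipschitz[OF S1(1) S0] by linarith
  qed
  ultimately show ?thesis unfolding S1_def[symmetric] S0_def[symmetric] E_def[symmetric] by linarith
qed

lemma phi_pow4_diff_le:
  assumes c: "c^2 < 1/4"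
  shows "\<bar>(cmod (phi c x))^4 - (phi0 x)^4\<bar> \<le> 21 * c^2 * exp (-\<bar>x\<bar>)"
proof -
  define U1 U0 where "U1 = soliton_depth (rho c) (1 - (tanh (kappa c * x))^2)"
    and "U0 = soliton_depth 2 (1 - (tanh x)^2)"
  have "0 \<le> 1 - (tanh (kappa c * x))^2" "1 - (tanh (kappa c * x))^2 \<le> 1" "0 \<le> 1 - (tanh x)^2" "1 - (tanh x)^2 \<le> 1"
    using one_minus_tanh_sq_bounds by (simp_all add: less_imp_le)
  then have U1: "0 \<le> U1" "U1 \<le> 1" and U0: "0 \<le> U0" "U0 \<le> 1"
    unfolding U1_def U0_def using soliton_depth_bounds[OF rho_ge_2 rho_le_3[OF c]] soliton_depth_bounds[of 2]
    by auto
  have pow4: "y^4 = (y^2)^2" for y :: real by simp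
  have "c^2 < 4" using c by simp
  then have "(cmod (phi c x))^4 = (1 - U1)^2" "(phi0 x)^4 = (1 - U0)^2"
    unfolding pow4 U1_def U0_def by (simp_all only: cmod_phi_sq phi0_sq)
  then have "\<bar>(cmod (phi c x))^4 - (phi0 x)^4\<bar> = \<bar>U1 - U0\<bar> * \<bar>2 - U1 - U0\<bar>"
    by (simp add: abs_mult[symmetric] algebra_simps power2_eq_square)
  also have "\<dots> \<le> \<bar>U1 - U0\<bar> * 2" using U1 U0 by (intro mult_left_mono) auto
  also have "\<dots> \<le> 21 * c^2 * exp (-\<bar>x\<bar>)"
    using mult_right_mono[OF soliton_depth_perturbation_le[OF c, of x], of 2]
    unfolding U1_def U0_def by (simp add: mult_ac)
  finally show ?thesis .
qed

section \<open>Pointwise control by a weighted energy\<close>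

lemma weak_deriv_increment_sq_le:
  assumes wd: "weak_deriv f g" and g: "L2 g" and ab: "a \<le> b"
  shows "(norm (f b - f a))^2 \<le> (b - a) * (\<integral>x. (norm (g x))^2 \<partial>lborel)"
proof -
  define A where "A = (\<integral>x. (norm (g x))^2 \<partial>lborel)"
  have [measurable]: "g \<in> borel_measurable lborel" and gi: "integrable lborel (\<lambda>x. (norm (g x))^2)"
    using g by (auto simp: L2_def)
  have nA: "(\<integral>\<^sup>+x. ennreal (norm (g x)) ^ 2 \<partial>lborel) = ennreal A"
    unfolding A_def using nn_integral_eq_integral[OF gi] by (simp add: ennreal_power)
  have "(\<integral>\<^sup>+x. (indicator {a..b} x :: ennreal) ^ 2 \<partial>lborel) = (\<integral>\<^sup>+x. indicator {a..b} x \<partial>lborel)"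
    by (intro nn_integral_cong) (simp split: split_indicator)
  then have nI: "(\<integral>\<^sup>+x. (indicator {a..b} x :: ennreal) ^ 2 \<partial>lborel) = ennreal (b - a)"
    using ab by simp
  have si: "set_integrable lborel {a..b} g" and eq: "f b - f a = (LINT t:{a..b}|lborel. g t)"
    using wd ab by (auto simp: weak_deriv_def)
  have "ennreal (norm (f b - f a)) \<le> (\<integral>\<^sup>+t. norm (indicator {a..b} t *\<^sub>R g t) \<partial>lborel)"
    unfolding eq set_lebesgue_integral_def
    by (rule integral_norm_bound_ennreal) (use si in \<open>simp add: set_integrable_def\<close>)
  also have "\<dots> = (\<integral>\<^sup>+t. indicator {a..b} t * ennreal (norm (g t)) \<partial>lborel)"
    by (intro nn_integral_cong) (simp split: split_indicator)
  finally have "ennreal (norm (f b - f a)) ^ 2 \<le> (\<integral>\<^sup>+t. indicator {a..b} t * ennreal (norm (g t)) \<partial>lborel) ^ 2"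
    by (rule power_mono) simp
  also have "\<dots> \<le> ennreal (b - a) * ennreal A"
    using Cauchy_Schwarz_nn_integral[of "indicator {a..b}" lborel "\<lambda>t. ennreal (norm (g t))"]
    by (simp add: nI nA)
  finally show ?thesis
    using ab by (simp add: A_def ennreal_power ennreal_mult[symmetric])
qed

lemma sq_norm_le_weighted_energy:
  fixes f g :: "real \<Rightarrow> complex" and w :: "real \<Rightarrow> real"
  assumes f: "continuous_on UNIV f" and wd: "weak_deriv f g" and g: "L2 g"
    and d: "0 < d" and w: "\<And>x. 0 \<le> w x" "\<And>x. x \<in> {0..1} \<Longrightarrow> d \<le> w x"
    and wf: "integrable lborel (\<lambda>x. w x * (norm (f x))^2)"
  shows "(norm (f x))^2 \<le> (2/d + 2 * (1 + \<bar>x\<bar>))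
           * ((\<integral>x. (norm (g x))^2 \<partial>lborel) + (\<integral>x. w x * (norm (f x))^2 \<partial>lborel))"
proof -
  define A B where "A = (\<integral>x. (norm (g x))^2 \<partial>lborel)" and "B = (\<integral>x. w x * (norm (f x))^2 \<partial>lborel)"
  have A: "0 \<le> A" and B: "0 \<le> B" using w by (simp_all add: A_def B_def)
  have "continuous_on {0..1} (\<lambda>t. (norm (f t))^2)"
    by (intro continuous_intros continuous_on_subset[OF f]) auto
  then obtain y where y: "y \<in> {0..1::real}" and y_min: "\<And>t. t \<in> {0..1} \<Longrightarrow> (norm (f y))^2 \<le> (norm (f t))^2"
    using continuous_attains_inf[of "{0..1::real}" "\<lambda>t. (norm (f t))^2"] by auto
  have "ennreal (d * (norm (f y))^2) = (\<integral>\<^sup>+t. ennreal (d * (norm (f y))^2) * indicator {0..1::real} t \<partial>lborel)"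
    by (subst nn_integral_cmult_indicator) auto
  also have "\<dots> \<le> (\<integral>\<^sup>+t. ennreal (w t * (norm (f t))^2) \<partial>lborel)"
    using d w y_min by (intro nn_integral_mono) (auto split: split_indicator intro!: ennreal_leI mult_mono)
  also have "\<dots> = ennreal B"
    unfolding B_def using w by (intro nn_integral_eq_integral[OF wf]) simp
  finally have "(norm (f y))^2 \<le> B / d"
    using d B by (simp add: field_simps)
  have "(norm (f x - f y))^2 \<le> \<bar>x - y\<bar> * A"
    using weak_deriv_increment_sq_le[OF wd g, of y x] weak_deriv_increment_sq_le[OF wd g, of x y]
    by (cases "y \<le> x") (simp_all add: A_def norm_minus_commute)
  have "(norm (f x))^2 \<le> (norm (f y) + norm (f x - f y))^2"
    using norm_triangle_sub[of "f x" "f y"] by (intro power_mono) auto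
  also have "\<dots> \<le> 2 * (norm (f y))^2 + 2 * (norm (f x - f y))^2"
    using zero_le_power2[of "norm (f y) - norm (f x - f y)"] by (simp add: power2_eq_square algebra_simps)
  also have "\<dots> \<le> 2 * (B / d) + 2 * (\<bar>x - y\<bar> * A)"
    using \<open>(norm (f y))^2 \<le> B / d\<close> \<open>(norm (f x - f y))^2 \<le> \<bar>x - y\<bar> * A\<close> by linarith
  also have "\<dots> \<le> 2 * ((A + B) / d) + 2 * ((1 + \<bar>x\<bar>) * (A + B))"
  proof -
    have "\<bar>x - y\<bar> * A \<le> (1 + \<bar>x\<bar>) * A" using y A by (intro mult_right_mono) auto
    also have "\<dots> \<le> (1 + \<bar>x\<bar>) * (A + B)" using B by (intro mult_left_mono) auto
    moreover have "B / d \<le> (A + B) / d" using A d by (intro divide_right_mono) auto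
    ultimately show ?thesis by linarith
  qed
  also have "\<dots> = (2/d + 2 * (1 + \<bar>x\<bar>)) * (A + B)"
    by (simp add: algebra_simps)
  finally show ?thesis by (simp add: A_def B_def)
qed

lemma nn_integral_exp_neg_abs_affine_le:
  assumes "0 \<le> a" "0 \<le> b"
  shows "(\<integral>\<^sup>+x. ennreal (exp (-\<bar>x\<bar>) * (a + b * \<bar>x\<bar>)) \<partial>lborel) \<le> ennreal (2 * (a + b))"
proof -
  define h where "h x = ennreal (exp (-x) * (a + b * x)) * indicator {0..} x" for x :: real
  have [measurable]: "h \<in> borel_measurable borel" unfolding h_def by measurable
  have e0: "(\<integral>\<^sup>+x. ennreal (exp (-x)) * indicator {0..} x \<partial>lborel) = 1"
    and e1: "(\<integral>\<^sup>+x. ennreal (x * exp (-x)) * indicator {0..} x \<partial>lborel) = 1"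
    using nn_intergal_power_times_exp_Ici[of 0] nn_intergal_power_times_exp_Ici[of 1] by simp_all
  have "(\<integral>\<^sup>+x. h x \<partial>lborel)
      = (\<integral>\<^sup>+x. ennreal a * (ennreal (exp (-x)) * indicator {0..} x)
                + ennreal b * (ennreal (x * exp (-x)) * indicator {0..} x) \<partial>lborel)"
    using assms by (intro nn_integral_cong)
      (auto simp: h_def algebra_simps ennreal_mult[symmetric] ennreal_plus[symmetric] simp del: ennreal_plus split: split_indicator)
  also have "\<dots> = ennreal (a + b)"
    using assms by (simp add: nn_integral_add nn_integral_cmult e0 e1 ennreal_plus[symmetric] del: ennreal_plus)
  finally have h: "(\<integral>\<^sup>+x. h x \<partial>lborel) = ennreal (a + b)" .
  have "(\<integral>\<^sup>+x. ennreal (exp (-\<bar>x\<bar>) * (a + b * \<bar>x\<bar>)) \<partial>lborel) \<le> (\<integral>\<^sup>+x. h x + h (-x) \<partial>lborel)"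
    by (intro nn_integral_mono) (auto simp: h_def split: split_indicator)
  also have "\<dots> = (\<integral>\<^sup>+x. h x \<partial>lborel) + (\<integral>\<^sup>+x. h (-x) \<partial>lborel)"
    by (intro nn_integral_add) auto
  also have "(\<integral>\<^sup>+x. h (-x) \<partial>lborel) = (\<integral>\<^sup>+x. h x \<partial>lborel)"
    using nn_integral_distr[of uminus lborel borel h] by (simp add: lborel_distr_uminus)
  finally show ?thesis
    using assms by (simp add: h ennreal_plus[symmetric] del: ennreal_plus)
qed

section \<open>The spaces \<open>Hspace c\<close>\<close>

lemma
  assumes "z \<in> Hspace c"
  shows weak_deriv_dH: "weak_deriv z (dH z)" and L2_dH: "L2 (dH z)"
proof -
  have "\<exists>g. weak_deriv z g \<and> L2 g" using assms by (simp add: Hspace_def)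
  then have "weak_deriv z (dH z) \<and> L2 (dH z)" unfolding dH_def by (rule someI_ex)
  then show "weak_deriv z (dH z)" "L2 (dH z)" by auto
qed

lemma Hnorm_sq:
  assumes "\<And>x. 0 \<le> eta c x"
  shows "(Hnorm c z)^2 = (\<integral>x. (norm (dH z x))^2 \<partial>lborel) + (\<integral>x. eta c x * (norm (z x))^2 \<partial>lborel)"
  using assms by (simp add: Hnorm_def)

lemma sq_norm_le_Hnorm:
  assumes c: "c^2 < 1/4" and z: "z \<in> Hspace c"
  shows "(norm (z x))^2 \<le> (52 + 2 * \<bar>x\<bar>) * (Hnorm c z)^2"
proof -
  have "continuous_on UNIV z" "integrable lborel (\<lambda>x. eta c x * (norm (z x))^2)"
    using z by (auto simp: Hspace_def)
  from sq_norm_le_weighted_energy[OF this(1) weak_deriv_dH[OF z] L2_dH[OF z] _ eta_bounds(1)[OF c]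
      eta_bounds(3)[OF c] this(2), where x = x]
  show ?thesis by (simp add: Hnorm_sq[OF eta_bounds(1)[OF c]] algebra_simps)
qed

lemma nn_integral_dominated_weight_le_Hnorm:
  assumes c: "c^2 < 1/4" and z: "z \<in> Hspace c"
    and K: "0 \<le> K" and w: "\<And>x. w x \<le> K * exp (-\<bar>x\<bar>)"
  shows "(\<integral>\<^sup>+x. ennreal (w x * (norm (z x))^2) \<partial>lborel) \<le> ennreal (108 * K * (Hnorm c z)^2)"
proof -
  define N where "N = (Hnorm c z)^2"
  have [measurable]: "z \<in> borel_measurable lborel" using z by (simp add: Hspace_def)
  have "(\<integral>\<^sup>+x. ennreal (w x * (norm (z x))^2) \<partial>lborel)
      \<le> (\<integral>\<^sup>+x. ennreal (K * N) * ennreal (exp (-\<bar>x\<bar>) * (52 + 2 * \<bar>x\<bar>)) \<partial>lborel)"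
  proof (intro nn_integral_mono)
    fix x
    have "w x * (norm (z x))^2 \<le> K * exp (-\<bar>x\<bar>) * ((52 + 2 * \<bar>x\<bar>) * N)"
      using w[of x] K sq_norm_le_Hnorm[OF c z, of x] unfolding N_def
      by (intro mult_mono) auto
    then show "ennreal (w x * (norm (z x))^2) \<le> ennreal (K * N) * ennreal (exp (-\<bar>x\<bar>) * (52 + 2 * \<bar>x\<bar>))"
      using K by (simp add: ennreal_mult[symmetric] ennreal_leI mult_ac N_def)
  qed
  also have "\<dots> \<le> ennreal (K * N) * ennreal (2 * (52 + 2))"
    using nn_integral_exp_neg_abs_affine_le[of 52 2]
    by (subst nn_integral_cmult) (auto intro!: mult_left_mono)
  also have "\<dots> = ennreal (108 * K * (Hnorm c z)^2)"
    using K by (subst ennreal_mult[symmetric]) (auto simp: N_def mult_ac)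
  finally show ?thesis .
qed

lemma
  assumes c1: "c1^2 < 1/4" and c2: "c2^2 < 1/4" and z: "z \<in> Hspace c1"
  shows integrable_eta_sq_norm: "integrable lborel (\<lambda>x. eta c2 x * (norm (z x))^2)"
    and integral_eta_sq_norm_le: "(\<integral>x. eta c2 x * (norm (z x))^2 \<partial>lborel) \<le> 1296 * (Hnorm c1 z)^2"
proof -
  have [measurable]: "z \<in> borel_measurable lborel" using z by (simp add: Hspace_def)
  have nn: "0 \<le> eta c2 x * (norm (z x))^2" for x using eta_bounds(1)[OF c2] by simp
  have I: "(\<integral>\<^sup>+x. ennreal (eta c2 x * (norm (z x))^2) \<partial>lborel) \<le> ennreal (1296 * (Hnorm c1 z)^2)"
    using nn_integral_dominated_weight_le_Hnorm[OF c1 z, of 12 "eta c2"] eta_bounds(2)[OF c2] by simp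
  show int: "integrable lborel (\<lambda>x. eta c2 x * (norm (z x))^2)"
    using I nn by (intro integrableI_bounded) (auto simp: top.not_eq_extremum intro: le_less_trans)
  show "(\<integral>x. eta c2 x * (norm (z x))^2 \<partial>lborel) \<le> 1296 * (Hnorm c1 z)^2"
    using I nn_integral_eq_integral[OF int] nn by simp
qed

lemma Hspace_subset:
  assumes "c1^2 < 1/4" "c2^2 < 1/4"
  shows "Hspace c1 \<subseteq> Hspace c2"
  using integrable_eta_sq_norm[OF assms] by (auto simp: Hspace_def)

lemma Hnorm_sq_le:
  assumes c1: "c1^2 < 1/4" and c2: "c2^2 < 1/4" and z: "z \<in> Hspace c1"
  shows "(Hnorm c2 z)^2 \<le> 1297 * (Hnorm c1 z)^2"
proof -
  have "0 \<le> (\<integral>x. eta c1 x * (norm (z x))^2 \<partial>lborel)" using eta_bounds(1)[OF c1] by simp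
  then show ?thesis
    using integral_eta_sq_norm_le[OF assms]
    by (simp add: Hnorm_sq[OF eta_bounds(1)[OF c1]] Hnorm_sq[OF eta_bounds(1)[OF c2]])
qed

theorem lemma2p6:
  shows "\<exists>cc::real. 0 < cc \<and> cc < 2 \<and>
    (\<exists>C::real. C > 0 \<and>
      (\<forall>c cs z. \<bar>c\<bar> < cc \<longrightarrow> \<bar>cs\<bar> < cc \<longrightarrow> z \<in> Hspace cs \<longrightarrow>
         (\<integral>\<^sup>+ x. ennreal (\<bar>(cmod (phi c x))^4 - (phi0 x)^4\<bar> * (cmod (z x))^2) \<partial>lborel)
           \<le> ennreal (C * c^2 * (Hnorm cs z)^2))) \<and>
    (\<forall>c. \<bar>c\<bar> < cc \<longrightarrow> Hspace c = Hspace 0) \<and>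
    (\<exists>s1 s2::real. s1 > 0 \<and> s2 > 0 \<and>
      (\<forall>c z. \<bar>c\<bar> < cc \<longrightarrow> z \<in> Hspace 0 \<longrightarrow>
         s1 * (Hnorm 0 z)^2 \<le> (Hnorm c z)^2 \<and> (Hnorm c z)^2 \<le> s2 * (Hnorm 0 z)^2))"
proof -
  have sq: "c^2 < 1/4" if "\<bar>c\<bar> < 1/2" for c :: real
    using power_strict_mono[of "\<bar>c\<bar>" "1/2" 2] that by (simp add: power_divide)
  have 0: "(0::real)^2 < 1/4" by simp
  have soliton: "(\<integral>\<^sup>+ x. ennreal (\<bar>(cmod (phi c x))^4 - (phi0 x)^4\<bar> * (cmod (z x))^2) \<partial>lborel)
      \<le> ennreal (2268 * c^2 * (Hnorm cs z)^2)" if "\<bar>c\<bar> < 1/2" "\<bar>cs\<bar> < 1/2" "z \<in> Hspace cs" for c cs z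
    using nn_integral_dominated_weight_le_Hnorm[OF sq[OF that(2)] that(3) _ phi_pow4_diff_le[OF sq[OF that(1)]]]
    by simp
  have same: "Hspace c = Hspace 0" if "\<bar>c\<bar> < 1/2" for c
    using Hspace_subset[OF sq[OF that] 0] Hspace_subset[OF 0 sq[OF that]] by blast
  have equiv: "1/1297 * (Hnorm 0 z)^2 \<le> (Hnorm c z)^2 \<and> (Hnorm c z)^2 \<le> 1297 * (Hnorm 0 z)^2"
    if "\<bar>c\<bar> < 1/2" "z \<in> Hspace 0" for c z
  proof -
    have "z \<in> Hspace c" using same[OF that(1)] that(2) by simp
    from Hnorm_sq_le[OF sq[OF that(1)] 0 this] Hnorm_sq_le[OF 0 sq[OF that(1)] that(2)]
    show ?thesis by simp
  qed
  show ?thesis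
    apply (rule exI[of _ "1/2"], intro conjI)
        apply simp
       apply simp
      apply (rule exI[of _ 2268]) using soliton apply simp
     using same apply blast
    apply (rule exI[of _ "1/1297"], rule exI[of _ 1297]) using equiv apply simp
    done
qed

end
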